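(* Let $(\mathfrak g,\theta,d)$ be a hermitian Lie algebra with $\mathfrak g=\mathfrak k\oplus\mathfrak p$ such that $\mathfrak k/\mathfrak z(\mathfrak k)$ has no open invariant cones. Then every non-empty open invariant convex cone $W\subseteq\mathfrak g$ intersects $\mathfrak z(\mathfrak k)$.
   Context: Hermitian Lie algebra: $\mathfrak g$ a real Banach–Lie algebra, $\theta$ a continuous involutive automorphism with eigenspaces $\mathfrak k=\ker(\theta-\mathbf1)$, $\mathfrak p=\ker(\theta+\mathbf 1)$, $d\in\mathfrak z(\mathfrak k)$, such that $\mathfrak p$ is a complex Hilbert space, $\mathrm{ad}\,x|_\mathfrak p$ ($x\in\mathfrak k$) is bounded skew-hermitian, $[d,x]=ix$ for $x\in\mathfrak p$, and $\{x\in\mathfrak k:[x,\mathfrak p]=0\}\subseteq\mathfrak z(\mathfrak k)$. An open invariant cone in a Banach–Lie algebra $\mathfrak l$ is an open convex cone ($W+W\subseteq W$, $tW\subseteq W$ for $t>0$) invariant under all $e^{\mathrm{ad}\,x}$, $x\in\mathfrak l$; $\mathfrak l$ has no open invariant cones if each non-empty such cone equals $\mathfrak l$. *)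

theory Defs
  imports "HOL-Analysis.Analysis"
begin

definition banach_lie_algebra :: "('a::banach \<Rightarrow> 'a \<Rightarrow> 'a) \<Rightarrow> bool" where
  "banach_lie_algebra br \<longleftrightarrow>
     bounded_bilinear br \<and>
     (\<forall>x y. br x y = - br y x) \<and>
     (\<forall>x y z. br x (br y z) + br y (br z x) + br z (br x y) = 0)"

definition exp_ad :: "('a::banach \<Rightarrow> 'a \<Rightarrow> 'a) \<Rightarrow> 'a \<Rightarrow> 'a \<Rightarrow> 'a" where
  "exp_ad br x y = (\<Sum>n. (1 / fact n) *\<^sub>R (((br x) ^^ n) y))"

definition kpart :: "('a::banach \<Rightarrow> 'a) \<Rightarrow> 'a set" where
  "kpart \<theta> = {x. \<theta> x = x}"

definition ppart :: "('a::banach \<Rightarrow> 'a) \<Rightarrow> 'a set" where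
  "ppart \<theta> = {x. \<theta> x = - x}"

definition centre :: "('a::banach \<Rightarrow> 'a \<Rightarrow> 'a) \<Rightarrow> 'a set \<Rightarrow> 'a set" where
  "centre br L = {x \<in> L. \<forall>y \<in> L. br x y = 0}"

text \<open>P is a complex Hilbert space: complex structure given by i x = [d,x] (so that
  [d,x] = i x holds by construction), h a complex inner product (linear in the first
  argument) whose norm is equivalent to the Banach norm on P (so P is complete).\<close>
definition complex_hilbert_structure ::
  "('a::banach \<Rightarrow> 'a \<Rightarrow> 'a) \<Rightarrow> 'a \<Rightarrow> 'a set \<Rightarrow> ('a \<Rightarrow> 'a \<Rightarrow> complex) \<Rightarrow> bool" where
  "complex_hilbert_structure br d P h \<longleftrightarrow>
     (\<forall>x\<in>P. br d (br d x) = - x) \<and>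
     (\<forall>x\<in>P. \<forall>y\<in>P. \<forall>z\<in>P. h (x + y) z = h x z + h y z) \<and>
     (\<forall>x\<in>P. \<forall>y\<in>P. \<forall>r::real. h (r *\<^sub>R x) y = complex_of_real r * h x y) \<and>
     (\<forall>x\<in>P. \<forall>y\<in>P. h (br d x) y = \<i> * h x y) \<and>
     (\<forall>x\<in>P. \<forall>y\<in>P. h y x = cnj (h x y)) \<and>
     (\<forall>x\<in>P. x \<noteq> 0 \<longrightarrow> Im (h x x) = 0 \<and> Re (h x x) > 0) \<and>
     (\<exists>c C. c > 0 \<and> C > 0 \<and>
        (\<forall>x\<in>P. c * norm x \<le> sqrt (Re (h x x)) \<and> sqrt (Re (h x x)) \<le> C * norm x))"

definition hermitian_lie_algebra ::
  "('a::banach \<Rightarrow> 'a \<Rightarrow> 'a) \<Rightarrow> ('a \<Rightarrow> 'a) \<Rightarrow> 'a \<Rightarrow> ('a \<Rightarrow> 'a \<Rightarrow> complex) \<Rightarrow> bool" where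
  "hermitian_lie_algebra br \<theta> d h \<longleftrightarrow>
     banach_lie_algebra br \<and>
     bounded_linear \<theta> \<and>
     (\<forall>x y. \<theta> (br x y) = br (\<theta> x) (\<theta> y)) \<and>
     (\<forall>x. \<theta> (\<theta> x) = x) \<and>
     d \<in> centre br (kpart \<theta>) \<and>
     complex_hilbert_structure br d (ppart \<theta>) h \<and>
     (\<forall>x\<in>kpart \<theta>.
        (\<exists>B. \<forall>y\<in>ppart \<theta>. Re (h (br x y) (br x y)) \<le> B * Re (h y y)) \<and>
        (\<forall>y\<in>ppart \<theta>. \<forall>z\<in>ppart \<theta>. h (br x y) z = - h y (br x z))) \<and>
     {x \<in> kpart \<theta>. \<forall>y\<in>ppart \<theta>. br x y = 0} \<subseteq> centre br (kpart \<theta>)"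

definition open_invariant_cone :: "('a::banach \<Rightarrow> 'a \<Rightarrow> 'a) \<Rightarrow> 'a set \<Rightarrow> 'a set \<Rightarrow> bool" where
  "open_invariant_cone br L W \<longleftrightarrow>
     W \<subseteq> L \<and> openin (top_of_set L) W \<and> convex W \<and>
     (\<forall>x\<in>W. \<forall>y\<in>W. x + y \<in> W) \<and>
     (\<forall>t::real. \<forall>x\<in>W. t > 0 \<longrightarrow> t *\<^sub>R x \<in> W) \<and>
     (\<forall>x\<in>L. \<forall>y\<in>W. exp_ad br x y \<in> W)"

text \<open>The quotient L/Z has no open invariant cones: written out via preimages under the
  (open) quotient map, i.e. Z-saturated open invariant cones in L.\<close>
definition no_open_invariant_cones_mod :: "('a::banach \<Rightarrow> 'a \<Rightarrow> 'a) \<Rightarrow> 'a set \<Rightarrow> 'a set \<Rightarrow> bool" where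
  "no_open_invariant_cones_mod br L Z \<longleftrightarrow>
     (\<forall>W. open_invariant_cone br L W \<and> W \<noteq> {} \<and> (\<forall>w\<in>W. \<forall>z\<in>Z. w + z \<in> W) \<longrightarrow> W = L)"

end

theory Submission
  imports Defs
begin

text \<open>Conjugation by \<open>exp (ad (\<pi> d))\<close> acts as \<open>\<theta>\<close>: it fixes \<open>k\<close> because \<open>d\<close> is central in
  \<open>k\<close>, and it is multiplication by \<open>exp (\<i> \<pi>) = -1\<close> on \<open>p\<close> because \<open>ad d\<close> is the complex
  structure of \<open>p\<close>. Hence an invariant cone \<open>W\<close> is \<open>\<theta>\<close>-stable, and by convexity it meets \<open>k\<close>.
  The set \<open>(W \<inter> k) + z(k)\<close> is then a non-empty open invariant cone in \<open>k\<close> saturated by the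
  centre \<open>z(k)\<close>, so by hypothesis it is all of \<open>k\<close>. In particular it contains \<open>0\<close>, i.e.
  \<open>-z \<in> W\<close> for some \<open>z \<in> z(k)\<close>.\<close>

lemma bounded_linear_funpow:
  fixes f :: "'a::real_normed_vector \<Rightarrow> 'a"
  assumes "bounded_linear f"
  shows "bounded_linear (f ^^ n)"
proof (induction n)
  case (Suc n)
  show ?case using bounded_linear_compose[OF assms Suc.IH] by (simp add: o_def)
qed (simp add: id_def bounded_linear_ident)

lemma summable_exp_ad:
  fixes br :: "'a::banach \<Rightarrow> 'a \<Rightarrow> 'a"
  assumes "bounded_bilinear br"
  shows "summable (\<lambda>n. (1 / fact n) *\<^sub>R ((br x ^^ n) y))"
proof -
  obtain K where K: "K > 0" "\<And>a b. norm (br a b) \<le> norm a * norm b * K"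
    using bounded_bilinear.pos_bounded[OF assms] by blast
  have bound: "norm ((br x ^^ n) y) \<le> (norm x * K) ^ n * norm y" for n
  proof (induction n)
    case (Suc n)
    have "norm ((br x ^^ Suc n) y) \<le> norm x * norm ((br x ^^ n) y) * K"
      using K(2) by simp
    also have "\<dots> \<le> norm x * ((norm x * K) ^ n * norm y) * K"
      using Suc K(1) by (intro mult_right_mono mult_left_mono) auto
    finally show ?case by (simp add: algebra_simps)
  qed simp
  have "summable (\<lambda>n. inverse (fact n) * (norm x * K) ^ n * norm y)"
    by (intro summable_mult2 summable_exp)
  then show ?thesis
  proof (rule summable_comparison_test')
    fix n
    show "norm ((1 / fact n) *\<^sub>R ((br x ^^ n) y)) \<le> inverse (fact n) * (norm x * K) ^ n * norm y"
      using mult_left_mono[OF bound, of "inverse (fact n)" n]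
      by (simp add: divide_inverse mult.assoc)
  qed
qed

lemma exp_ad_add:
  assumes "bounded_bilinear br"
  shows "exp_ad br x (u + v) = exp_ad br x u + exp_ad br x v"
proof -
  have lin: "bounded_linear (br x ^^ n)" for n
    by (rule bounded_linear_funpow[OF bounded_bilinear.bounded_linear_right[OF assms]])
  show ?thesis
    unfolding exp_ad_def
    by (simp add: linear_add[OF bounded_linear.linear[OF lin]] scaleR_add_right
        suminf_add[OF summable_exp_ad[OF assms] summable_exp_ad[OF assms]])
qed

lemma exp_ad_fixed:
  assumes "bounded_bilinear br" and "br x z = 0"
  shows "exp_ad br x z = z"
proof -
  have "(br x ^^ n) z = (if n = 0 then z else 0)" for n
    by (induction n) (auto simp: assms(2) bounded_bilinear.zero_right[OF assms(1)])
  then have "(\<lambda>n. (1 / fact n) *\<^sub>R (br x ^^ n) z) = (\<lambda>n. if n = 0 then z else 0)"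
    by auto
  then show ?thesis
    unfolding exp_ad_def using sums_unique[OF sums_single[of 0 "\<lambda>_. z"]] by simp
qed

lemma exp_ad_rotation:
  assumes "bounded_bilinear br" and "br d (br d b) = - b"
  shows "exp_ad br (t *\<^sub>R d) b = cos t *\<^sub>R b + sin t *\<^sub>R br d b"
proof -
  let ?D = "br (t *\<^sub>R d)"
  note scaleR = bounded_bilinear.scaleR_left[OF assms(1)] bounded_bilinear.scaleR_right[OF assms(1)]
  have iter: "(?D ^^ n) b = (if even n then ((-1) ^ (n div 2) * t ^ n) *\<^sub>R b
      else ((-1) ^ (n div 2) * t ^ n) *\<^sub>R br d b)" for n
  proof (induction n)
    case (Suc n)
    show ?case
    proof (cases "even n")
      case False
      then have "Suc n div 2 = Suc (n div 2)" by presburger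
      with Suc False show ?thesis by (simp add: scaleR assms(2))
    qed (use Suc in \<open>simp add: scaleR\<close>)
  qed simp
  have coeff: "(1 / fact n) *\<^sub>R (?D ^^ n) b
      = (cos_coeff n * t ^ n) *\<^sub>R b + (sin_coeff n * t ^ n) *\<^sub>R br d b" for n
  proof (cases "even n")
    case False
    then have "(n - Suc 0) div 2 = n div 2" by presburger
    with False show ?thesis by (simp add: iter cos_coeff_def sin_coeff_def)
  qed (simp add: iter cos_coeff_def sin_coeff_def)
  have "(\<lambda>n. cos_coeff n * t ^ n) sums cos t" "(\<lambda>n. sin_coeff n * t ^ n) sums sin t"
    using cos_converges[of t] sin_converges[of t] by simp_all
  then have "(\<lambda>n. (1 / fact n) *\<^sub>R (?D ^^ n) b) sums (cos t *\<^sub>R b + sin t *\<^sub>R br d b)"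
    unfolding coeff by (intro sums_add sums_scaleR_left)
  then show ?thesis
    unfolding exp_ad_def by (rule sums_unique[symmetric])
qed

lemma subspace_kpart:
  assumes "linear \<theta>"
  shows "subspace (kpart \<theta>)"
  using assms by (simp add: subspace_def kpart_def linear_add linear_scale linear_0)

lemma subspace_centre:
  assumes "bounded_bilinear br" and "subspace K"
  shows "subspace (centre br K)"
  using assms(2)
  by (auto simp: subspace_def centre_def bounded_bilinear.add_left[OF assms(1)]
      bounded_bilinear.scaleR_left[OF assms(1)] bounded_bilinear.zero_left[OF assms(1)])

lemma exp_ad_kpart:
  assumes "bounded_bilinear br" and "bounded_linear \<theta>"
    and hom: "\<And>x y. \<theta> (br x y) = br (\<theta> x) (\<theta> y)"
    and "y \<in> kpart \<theta>" "w \<in> kpart \<theta>"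
  shows "exp_ad br y w \<in> kpart \<theta>"
proof -
  have iter: "(br y ^^ n) w \<in> kpart \<theta>" for n
    by (induction n) (use assms(4,5) hom in \<open>auto simp: kpart_def\<close>)
  have "\<theta> (exp_ad br y w) = (\<Sum>n. \<theta> ((1 / fact n) *\<^sub>R (br y ^^ n) w))"
    unfolding exp_ad_def by (rule bounded_linear.suminf[OF assms(2) summable_exp_ad[OF assms(1)]])
  also have "\<dots> = exp_ad br y w"
    unfolding exp_ad_def using iter by (simp add: linear_scale[OF bounded_linear.linear[OF assms(2)]] kpart_def)
  finally show ?thesis by (simp add: kpart_def)
qed

lemma hermitian_lie_algebraD:
  assumes "hermitian_lie_algebra br \<theta> d h"
  shows "banach_lie_algebra br" and "bounded_linear \<theta>"
    and "\<theta> (br x y) = br (\<theta> x) (\<theta> y)" and "\<theta> (\<theta> x) = x"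
    and "d \<in> centre br (kpart \<theta>)" and "b \<in> ppart \<theta> \<Longrightarrow> br d (br d b) = - b"
  using assms unfolding hermitian_lie_algebra_def complex_hilbert_structure_def by simp_all

lemma hermitian_exp_ad_pi_d:
  assumes "hermitian_lie_algebra br \<theta> d h"
  shows "exp_ad br (pi *\<^sub>R d) x = \<theta> x"
proof -
  note H = hermitian_lie_algebraD[OF assms]
  have bb: "bounded_bilinear br"
    using H(1) unfolding banach_lie_algebra_def by blast
  have lin: "linear \<theta>" using H(2) by (rule bounded_linear.linear)
  define a where "a = (1/2) *\<^sub>R (x + \<theta> x)"
  define b where "b = (1/2) *\<^sub>R (x - \<theta> x)"
  have "a \<in> kpart \<theta>" "b \<in> ppart \<theta>"
    by (simp_all add: a_def b_def kpart_def ppart_def H(4) linear_add linear_diff linear_scale lin)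
  then have "br (pi *\<^sub>R d) a = 0" "br d (br d b) = - b"
    using H(5,6) by (auto simp: centre_def bounded_bilinear.scaleR_left[OF bb])
  moreover have "x = a + b" "\<theta> x = a - b"
    using scaleR_add_left[of "1/2" "1/2" x, symmetric] scaleR_add_left[of "1/2" "1/2" "\<theta> x", symmetric]
    by (simp_all add: a_def b_def algebra_simps)
  ultimately show ?thesis
    by (simp add: exp_ad_add[OF bb] exp_ad_fixed[OF bb] exp_ad_rotation[OF bb])
qed

lemma invariant_cone_meets_kpart:
  assumes "hermitian_lie_algebra br \<theta> d h" and "open_invariant_cone br UNIV W" and "x \<in> W"
  shows "(1/2) *\<^sub>R (x + \<theta> x) \<in> W \<inter> kpart \<theta>"
proof -
  note H = hermitian_lie_algebraD[OF assms(1)]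
  have "exp_ad br (pi *\<^sub>R d) x \<in> W"
    using assms(2,3) unfolding open_invariant_cone_def by blast
  then have "\<theta> x \<in> W" by (simp add: hermitian_exp_ad_pi_d[OF assms(1)])
  then have "(1/2) *\<^sub>R (x + \<theta> x) \<in> W"
    using assms(2,3) convexD[of W x "\<theta> x" "1/2" "1/2"]
    by (simp add: open_invariant_cone_def scaleR_add_right)
  moreover have "(1/2) *\<^sub>R (x + \<theta> x) \<in> kpart \<theta>"
    using bounded_linear.linear[OF H(2)] by (simp add: kpart_def linear_add linear_scale H(4))
  ultimately show ?thesis by blast
qed

definition central_saturation :: "('a::banach \<Rightarrow> 'a \<Rightarrow> 'a) \<Rightarrow> 'a set \<Rightarrow> 'a set \<Rightarrow> 'a set" where
  "central_saturation br K W = {w + z | w z. w \<in> W \<inter> K \<and> z \<in> centre br K}"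

lemma central_saturation_saturated:
  assumes "bounded_bilinear br" and "subspace K" and "u \<in> central_saturation br K W"
    and "z \<in> centre br K"
  shows "u + z \<in> central_saturation br K W"
proof -
  obtain w z' where "u = w + z'" "w \<in> W \<inter> K" "z' \<in> centre br K"
    using assms(3) by (auto simp: central_saturation_def)
  moreover have "z' + z \<in> centre br K"
    using subspace_add[OF subspace_centre[OF assms(1,2)]] calculation(3) assms(4) by blast
  ultimately have "u + z = w + (z' + z)" "w \<in> W \<inter> K" "z' + z \<in> centre br K"
    by (simp_all add: add.assoc)
  then show ?thesis
    unfolding central_saturation_def by blast
qed

lemma central_saturation_eq_Int_translates:
  assumes "subspace K"
  shows "central_saturation br K W = K \<inter> (\<Union>z\<in>centre br K. (\<lambda>w. z + w) ` W)"
proof (intro equalityI subsetI)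
  fix u assume "u \<in> central_saturation br K W"
  then obtain w z where "u = w + z" "w \<in> W \<inter> K" "z \<in> centre br K"
    unfolding central_saturation_def by blast
  moreover from this have "u \<in> K"
    using subspace_add[OF assms] by (auto simp: centre_def)
  moreover from calculation have "u \<in> (\<lambda>w. z + w) ` W" by (simp add: add.commute)
  ultimately show "u \<in> K \<inter> (\<Union>z\<in>centre br K. (\<lambda>w. z + w) ` W)" by blast
next
  fix u assume "u \<in> K \<inter> (\<Union>z\<in>centre br K. (\<lambda>w. z + w) ` W)"
  then obtain z w where "u = z + w" "u \<in> K" "z \<in> centre br K" "w \<in> W" by blast
  moreover have "w \<in> K"
    using calculation subspace_diff[OF assms, of u z] by (auto simp: centre_def)
  ultimately show "u \<in> central_saturation br K W"
    unfolding central_saturation_def by (auto simp: add.commute)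
qed

lemma central_saturation_open_invariant_cone:
  assumes lie: "banach_lie_algebra br" and "subspace K"
    and exp_K: "\<And>y w. y \<in> K \<Longrightarrow> w \<in> K \<Longrightarrow> exp_ad br y w \<in> K"
    and W: "open_invariant_cone br UNIV W"
  shows "open_invariant_cone br K (central_saturation br K W)"
proof -
  let ?Z = "centre br K" and ?S = "central_saturation br K W"
  have bb: "bounded_bilinear br" and anti: "\<And>x y. br x y = - br y x"
    using lie unfolding banach_lie_algebra_def by blast+
  have Z: "subspace ?Z" by (rule subspace_centre[OF bb \<open>subspace K\<close>])
  have WK: "open W" "convex W" "\<And>x y. x \<in> W \<Longrightarrow> y \<in> W \<Longrightarrow> x + y \<in> W"
      "\<And>t x. 0 < t \<Longrightarrow> x \<in> W \<Longrightarrow> t *\<^sub>R x \<in> W" "\<And>y x. x \<in> W \<Longrightarrow> exp_ad br y x \<in> W"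
    using W by (auto simp: open_invariant_cone_def)
  have SK: "?S \<subseteq> K"
    using central_saturation_eq_Int_translates[OF \<open>subspace K\<close>] by blast
  have "openin (top_of_set K) ?S"
    unfolding central_saturation_eq_Int_translates[OF \<open>subspace K\<close>]
    by (simp add: openin_open_Int open_UN open_translation WK(1))
  moreover have "convex ?S"
  proof -
    have "?S = (\<Union>x\<in>W \<inter> K. \<Union>y\<in>?Z. {x + y})" by (auto simp: central_saturation_def)
    then show ?thesis
      by (simp add: convex_sums convex_Int WK(2) subspace_imp_convex \<open>subspace K\<close> Z)
  qed
  moreover have "u + v \<in> ?S" if u: "u \<in> ?S" and v: "v \<in> ?S" for u v
  proof -
    obtain w z where "u = w + z" "w \<in> W \<inter> K" "z \<in> ?Z"
      using u unfolding central_saturation_def by blast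
    moreover obtain w' z' where "v = w' + z'" "w' \<in> W \<inter> K" "z' \<in> ?Z"
      using v unfolding central_saturation_def by blast
    ultimately have "u + v = (w + w') + (z + z')" "w + w' \<in> W \<inter> K" "z + z' \<in> ?Z"
      using WK(3) subspace_add[OF \<open>subspace K\<close>] subspace_add[OF Z] by (auto simp: algebra_simps)
    then show ?thesis unfolding central_saturation_def by blast
  qed
  moreover have "t *\<^sub>R u \<in> ?S" if t: "0 < t" and u: "u \<in> ?S" for t u
  proof -
    obtain w z where "u = w + z" "w \<in> W \<inter> K" "z \<in> ?Z"
      using u unfolding central_saturation_def by blast
    then have "t *\<^sub>R u = t *\<^sub>R w + t *\<^sub>R z" "t *\<^sub>R w \<in> W \<inter> K" "t *\<^sub>R z \<in> ?Z"
      using WK(4)[OF t] subspace_scale[OF \<open>subspace K\<close>] subspace_scale[OF Z]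
      by (auto simp: scaleR_add_right)
    then show ?thesis unfolding central_saturation_def by blast
  qed
  moreover have "exp_ad br y u \<in> ?S" if y: "y \<in> K" and u: "u \<in> ?S" for y u
  proof -
    obtain w z where wz: "u = w + z" "w \<in> W \<inter> K" "z \<in> ?Z"
      using u unfolding central_saturation_def by blast
    then have "br y z = 0" using y anti[of y z] by (auto simp: centre_def)
    then have "exp_ad br y u = exp_ad br y w + z"
      by (simp add: wz(1) exp_ad_add[OF bb] exp_ad_fixed[OF bb])
    moreover have "exp_ad br y w \<in> W \<inter> K" using wz(2) WK(5) exp_K y by blast
    ultimately show ?thesis using wz(3) unfolding central_saturation_def by blast
  qed
  ultimately show ?thesis
    using SK by (simp add: open_invariant_cone_def)
qed

theorem proposition4p11:
  fixes br :: "'a::banach \<Rightarrow> 'a \<Rightarrow> 'a" and \<theta> :: "'a \<Rightarrow> 'a" and d :: 'a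
    and h :: "'a \<Rightarrow> 'a \<Rightarrow> complex" and W :: "'a set"
  assumes "hermitian_lie_algebra br \<theta> d h"
    and "no_open_invariant_cones_mod br (kpart \<theta>) (centre br (kpart \<theta>))"
    and "open_invariant_cone br UNIV W"
    and "W \<noteq> {}"
  shows "W \<inter> centre br (kpart \<theta>) \<noteq> {}"
proof -
  let ?K = "kpart \<theta>" and ?Z = "centre br (kpart \<theta>)" and ?S = "central_saturation br (kpart \<theta>) W"
  note H = hermitian_lie_algebraD[OF assms(1)]
  have lie: "banach_lie_algebra br" and \<theta>: "bounded_linear \<theta>"
    and hom: "\<And>x y. \<theta> (br x y) = br (\<theta> x) (\<theta> y)"
    using H(1-3) .
  then have bb: "bounded_bilinear br" unfolding banach_lie_algebra_def by blast
  have K: "subspace ?K" using \<theta> by (simp add: subspace_kpart bounded_linear.linear)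
  have Z: "subspace ?Z" by (rule subspace_centre[OF bb K])
  obtain x where "x \<in> W" using assms(4) by blast
  then have "(1/2) *\<^sub>R (x + \<theta> x) + 0 \<in> ?S"
    using invariant_cone_meets_kpart[OF assms(1,3)] subspace_0[OF Z]
    unfolding central_saturation_def by blast
  then have "?S \<noteq> {}" by blast
  moreover have "open_invariant_cone br ?K ?S"
  proof (rule central_saturation_open_invariant_cone[OF lie K _ assms(3)])
    show "\<And>y w. y \<in> ?K \<Longrightarrow> w \<in> ?K \<Longrightarrow> exp_ad br y w \<in> ?K"
      by (intro exp_ad_kpart bb \<theta> hom)
  qed
  moreover have "\<forall>u\<in>?S. \<forall>z\<in>?Z. u + z \<in> ?S"
    using central_saturation_saturated[OF bb K] by blast
  ultimately have "?S = ?K"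
    using assms(2) unfolding no_open_invariant_cones_mod_def by blast
  then obtain w z where "0 = w + z" "w \<in> W" "z \<in> ?Z"
    using subspace_0[OF K] unfolding central_saturation_def by blast
  then have "w = - z" by (metis add_diff_cancel_right' diff_0)
  with \<open>w \<in> W\<close> \<open>z \<in> ?Z\<close> subspace_neg[OF Z] show ?thesis by blast
qed

end
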